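(* Let $n\ge1$, $p=\tfrac12(n+1)$, $N\ge0$ an integer, $a\in\mathbb{C}$, and let $\mu$ be a partition with $\mu\subset(N^n)$ (i.e. $\ell(\mu)\le n$ and $\mu_1\le N$). Define $\hat\mu$ by $\hat\mu_i=N-\mu_{n+1-i}$ ($1\le i\le n$). Then $$(a)_{\hat\mu}\,(-a-N+p)_\mu=(-1)^{|\mu|}\,(a)_{(N^n)}.$$
   Context: For a partition $\lambda$ of length $\le n$, $(a)_\lambda=\prod_{i=1}^n\big(a-\tfrac12(i-1)\big)_{\lambda_i}$, where $(c)_r=c(c+1)\cdots(c+r-1)$. $(N^n)$ is the partition with $n$ parts all equal to $N$. *)

theory Defs
  imports Complex_Main
begin

text \<open>Partitions of length at most n are represented as functions nat => nat,
  parts indexed 1..n, weakly decreasing, zero beyond n.\<close>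

definition is_partition_len :: "nat \<Rightarrow> (nat \<Rightarrow> nat) \<Rightarrow> bool" where
  "is_partition_len n lam \<longleftrightarrow>
     (\<forall>i j. 1 \<le> i \<longrightarrow> i \<le> j \<longrightarrow> lam j \<le> lam i) \<and> (\<forall>i. i = 0 \<or> i > n \<longrightarrow> lam i = 0)"

definition psize :: "nat \<Rightarrow> (nat \<Rightarrow> nat) \<Rightarrow> nat" where
  "psize n lam = (\<Sum>i=1..n. lam i)"

definition gen_poch :: "nat \<Rightarrow> complex \<Rightarrow> (nat \<Rightarrow> nat) \<Rightarrow> complex" where
  "gen_poch n a lam = (\<Prod>i=1..n. pochhammer (a - of_nat (i - 1) / 2) (lam i))"

definition rect :: "nat \<Rightarrow> nat \<Rightarrow> (nat \<Rightarrow> nat)" where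
  "rect n N = (\<lambda>i. if 1 \<le> i \<and> i \<le> n then N else 0)"

definition compl_part :: "nat \<Rightarrow> nat \<Rightarrow> (nat \<Rightarrow> nat) \<Rightarrow> (nat \<Rightarrow> nat)" where
  "compl_part n N mu = (\<lambda>i. if 1 \<le> i \<and> i \<le> n then N - mu (n + 1 - i) else 0)"

end

theory Submission
  imports Defs
begin

text \<open>Reversing the index, \<open>j = n + 1 - i\<close>, gives the \<open>i\<close>-th factor of \<open>(a)_\<mu>^\<close> the same
  base \<open>b = a - (n - j)/2\<close> as the \<open>j\<close>-th factor of \<open>(a)_(N^n)\<close>, while the \<open>j\<close>-th factor of
  \<open>(-a-N+p)_\<mu>\<close> has base \<open>-b-N+1\<close>. So the theorem is the product over \<open>j\<close> of the
  reflection \<open>(b)_(N-m) (-b-N+1)_m = (-1)^m (b)_N\<close>: split \<open>(b)_N\<close> after \<open>N - m\<close> factors and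
  read the remaining \<open>m\<close> factors backwards.\<close>

lemma pochhammer_diff_mult_pochhammer_reflect:
  fixes b :: "'a :: comm_ring_1"
  assumes "m \<le> N"
  shows "pochhammer b (N - m) * pochhammer (- b - of_nat N + 1) m = (-1) ^ m * pochhammer b N"
proof -
  have split: "pochhammer b N = pochhammer b (N - m) * pochhammer (b + of_nat (N - m)) m"
    using pochhammer_product[of "N - m" N b] assms by simp
  have "pochhammer (- b - of_nat N + 1) m = pochhammer (- (b + of_nat N - 1)) m"
    by (simp add: algebra_simps)
  also have "\<dots> = (-1) ^ m * pochhammer (b + of_nat N - 1 - of_nat m + 1) m"
    by (rule pochhammer_minus)
  also have "b + of_nat N - 1 - of_nat m + 1 = b + of_nat (N - m)"
    using assms by (simp add: of_nat_diff)
  finally show ?thesis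
    by (simp add: split)
qed

lemma gen_poch_compl_part:
  "gen_poch n a (compl_part n N mu) = (\<Prod>j=1..n. pochhammer (a - of_nat (n - j) / 2) (N - mu j))"
proof -
  have "gen_poch n a (compl_part n N mu)
      = (\<Prod>i=1..n. pochhammer (a - of_nat (i - 1) / 2) (N - mu (n + 1 - i)))"
    unfolding gen_poch_def compl_part_def by (rule prod.cong) auto
  also have "\<dots> = (\<Prod>j=1..n. pochhammer (a - of_nat (n - j) / 2) (N - mu j))"
    by (rule prod.reindex_bij_witness[where i="\<lambda>j. n + 1 - j" and j="\<lambda>i. n + 1 - i"]) auto
  finally show ?thesis .
qed

lemma rect_eq_compl_part_zero: "rect n N = compl_part n N (\<lambda>_. 0)"
  unfolding rect_def compl_part_def by (simp add: fun_eq_iff)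

lemma gen_poch_rect:
  "gen_poch n a (rect n N) = (\<Prod>j=1..n. pochhammer (a - of_nat (n - j) / 2) N)"
  unfolding rect_eq_compl_part_zero gen_poch_compl_part by simp

lemma minus_one_power_psize: "(-1 :: complex) ^ psize n mu = (\<Prod>j=1..n. (-1) ^ mu j)"
  unfolding psize_def by (simp add: power_sum)

text \<open>Only \<open>\<mu>\<^sub>i \<le> N\<close> is used: the identity holds for any \<open>\<mu>\<close> bounded by \<open>N\<close>,
  ordered or not, and for \<open>n = 0\<close>.\<close>

theorem mainTheorem9:
  fixes n N :: nat and a :: complex and mu :: "nat \<Rightarrow> nat"
  assumes "n \<ge> 1"
    and "is_partition_len n mu"
    and "\<forall>i. mu i \<le> N"
  shows "gen_poch n a (compl_part n N mu) * gen_poch n (- a - of_nat N + (of_nat n + 1) / 2) mu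
         = (-1) ^ psize n mu * gen_poch n a (rect n N)"
proof -
  have factor: "pochhammer (a - of_nat (n - j) / 2) (N - mu j)
      * pochhammer (- a - of_nat N + (of_nat n + 1) / 2 - of_nat (j - 1) / 2) (mu j)
      = (-1) ^ mu j * pochhammer (a - of_nat (n - j) / 2) N" if "j \<in> {1..n}" for j
  proof -
    have base: "- a - of_nat N + (of_nat n + 1) / 2 - of_nat (j - 1) / 2
        = - (a - of_nat (n - j) / 2) - of_nat N + 1"
      using that by (simp add: of_nat_diff field_simps)
    show ?thesis
      unfolding base by (rule pochhammer_diff_mult_pochhammer_reflect) (use assms(3) in blast)
  qed
  show ?thesis
    unfolding gen_poch_compl_part gen_poch_rect minus_one_power_psize
      gen_poch_def[of n "- a - of_nat N + (of_nat n + 1) / 2"] prod.distrib[symmetric]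
    by (rule prod.cong[OF refl factor])
qed

end
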